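(* In the perceptive model, the neighbors discovery task can be solved deterministically in $O(\log N)$ rounds.
   Context: Model (perceptive): $n>4$ agents are at distinct, arbitrary initial positions on a circle of circumference $1$ and act in synchronised unit-time rounds. Each agent has its own notion of right (clockwise) and left; these need not be consistent across agents. At the start of each round every agent $a$ chooses $\mathrm{dir}_a\in\{\text{right},\text{left}\}$ and moves at unit speed. Agents never pass: two colliding agents instantly reverse direction. There is no communication. At the end of each round every agent learns two values, both measured relative to its start-of-round position and in its own orientation: - the clockwise distance to its end-of-round position; - the distance to its first collision in that round. Agents have distinct IDs in $\{1,\dots,N\}$ with $N\ge n$ known. For an agent $a$, $\mathrm{Left}(a)$ and $\mathrm{Right}(a)$ denote its immediate neighbours on the ring in its left and right directions (by its own orientation). Neighbors discovery task: each agent $a$ must - learn the positions of $\mathrm{Left}(a)$ and $\mathrm{Right}(a)$ relative to its own initial position, and - determine whether $\mathrm{Left}(a)$ and $\mathrm{Right}(a)$ have the same sense of direction as $a$. *)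

theory Defs
  imports Complex_Main
begin

(* Positions on the circle of circumference 1 are reals in [0,1);
   the global clockwise direction is the direction of increasing coordinate.
   cw i = True iff agent i's own "right" is the global clockwise direction. *)

type_synonym percept = "real \<times> real option"
  (* (own-clockwise distance start -> end of round,  distance travelled to first collision) *)

definition own_sgn :: "(nat \<Rightarrow> bool) \<Rightarrow> nat \<Rightarrow> real" where
  "own_sgn cw i = (if cw i then 1 else -1)"

(* global velocity: +1 (clockwise) iff the chosen own direction (True = own right) agrees
   with the agent's orientation *)
definition velocity :: "(nat \<Rightarrow> bool) \<Rightarrow> (nat \<Rightarrow> bool) \<Rightarrow> nat \<Rightarrow> real" where
  "velocity cw d i = (if d i = cw i then 1 else -1)"

definition rank :: "nat \<Rightarrow> (nat \<Rightarrow> real) \<Rightarrow> nat \<Rightarrow> nat" where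
  "rank n p i = card {j. j < n \<and> p j < p i}"

(* Collision dynamics via the standard "pass-through" equivalence.  Lifting to the real line,
   the virtual (non-interacting) particles are p i + m + v i * t (i < n, m integer).  cnt counts,
   relative to the initial labelling, the virtual particles strictly below y at time t. *)
definition cnt :: "nat \<Rightarrow> (nat \<Rightarrow> real) \<Rightarrow> (nat \<Rightarrow> real) \<Rightarrow> real \<Rightarrow> real \<Rightarrow> int" where
  "cnt n p v t y =
     int (card {(i, m::int). i < n \<and> 0 \<le> p i + real_of_int m \<and> p i + real_of_int m + v i * t < y})
   - int (card {(i, m::int). i < n \<and> p i + real_of_int m < 0 \<and> y \<le> p i + real_of_int m + v i * t})"

(* k-th order statistic (lifted) at time t: since agents never pass, the agent of rank k
   is at position ostat ... k t (lifted to the real line) *)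
definition ostat :: "nat \<Rightarrow> (nat \<Rightarrow> real) \<Rightarrow> (nat \<Rightarrow> real) \<Rightarrow> int \<Rightarrow> real \<Rightarrow> real" where
  "ostat n p v k t = Sup {y. cnt n p v t y \<le> k}"

definition lpos :: "nat \<Rightarrow> (nat \<Rightarrow> real) \<Rightarrow> (nat \<Rightarrow> real) \<Rightarrow> nat \<Rightarrow> real \<Rightarrow> real" where
  "lpos n p v i t = ostat n p v (int (rank n p i)) t"

definition collides :: "nat \<Rightarrow> (nat \<Rightarrow> real) \<Rightarrow> (nat \<Rightarrow> real) \<Rightarrow> nat \<Rightarrow> real \<Rightarrow> bool" where
  "collides n p v i t =
     (let r = int (rank n p i) in
        ostat n p v r t = ostat n p v (r + 1) t \<or> ostat n p v r t = ostat n p v (r - 1) t)"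

(* distance (= time, unit speed) travelled until the first collision in the round, if any *)
definition coll_dist :: "nat \<Rightarrow> (nat \<Rightarrow> real) \<Rightarrow> (nat \<Rightarrow> real) \<Rightarrow> nat \<Rightarrow> real option" where
  "coll_dist n p v i =
     (if \<exists>t\<in>{0<..1}. collides n p v i t
      then Some (Inf {t\<in>{0<..1}. collides n p v i t}) else None)"

definition end_dist :: "nat \<Rightarrow> (nat \<Rightarrow> real) \<Rightarrow> (nat \<Rightarrow> real) \<Rightarrow> (nat \<Rightarrow> bool) \<Rightarrow> nat \<Rightarrow> real" where
  "end_dist n p v cw i = frac (own_sgn cw i * (lpos n p v i 1 - p i))"

(* execution of an algorithm: alg (ID) (own history) = chosen direction (True = own right).
   Returns positions at the start of round r+1 and each agent's perception history. *)
fun run :: "nat \<Rightarrow> (nat \<Rightarrow> bool) \<Rightarrow> (nat \<Rightarrow> nat) \<Rightarrow> (nat \<Rightarrow> percept list \<Rightarrow> bool)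
            \<Rightarrow> (nat \<Rightarrow> real) \<Rightarrow> nat \<Rightarrow> (nat \<Rightarrow> real) \<times> (nat \<Rightarrow> percept list)" where
  "run n cw ids alg p0 0 = (p0, (\<lambda>i. []))"
| "run n cw ids alg p0 (Suc r) =
     (let (p, h) = run n cw ids alg p0 r;
          v = velocity cw (\<lambda>i. alg (ids i) (h i))
      in (\<lambda>i. frac (lpos n p v i 1),
          \<lambda>i. h i @ [(end_dist n p v cw i, coll_dist n p v i)]))"

definition own_coord :: "(nat \<Rightarrow> bool) \<Rightarrow> (nat \<Rightarrow> real) \<Rightarrow> nat \<Rightarrow> real \<Rightarrow> real" where
  "own_coord cw p a q = frac (own_sgn cw a * (q - p a))"

definition is_Right :: "nat \<Rightarrow> (nat \<Rightarrow> bool) \<Rightarrow> (nat \<Rightarrow> real) \<Rightarrow> nat \<Rightarrow> nat \<Rightarrow> bool" where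
  "is_Right n cw p a b \<longleftrightarrow> b < n \<and> b \<noteq> a \<and>
     (\<forall>c<n. c \<noteq> a \<longrightarrow> own_coord cw p a (p b) \<le> own_coord cw p a (p c))"

definition is_Left :: "nat \<Rightarrow> (nat \<Rightarrow> bool) \<Rightarrow> (nat \<Rightarrow> real) \<Rightarrow> nat \<Rightarrow> nat \<Rightarrow> bool" where
  "is_Left n cw p a b \<longleftrightarrow> b < n \<and> b \<noteq> a \<and>
     (\<forall>c<n. c \<noteq> a \<longrightarrow> own_coord cw p a (p c) \<le> own_coord cw p a (p b))"

(* output (xR, xL, sR, sL): positions of Right(a), Left(a) relative to a's initial position
   (own-clockwise distance), and whether Right(a) / Left(a) share a's sense of direction *)
definition nd_correct :: "nat \<Rightarrow> (nat \<Rightarrow> bool) \<Rightarrow> (nat \<Rightarrow> real) \<Rightarrow> nat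
                          \<Rightarrow> real \<times> real \<times> bool \<times> bool \<Rightarrow> bool" where
  "nd_correct n cw p a out \<longleftrightarrow>
     (case out of (xR, xL, sR, sL) \<Rightarrow>
       (\<exists>b. is_Right n cw p a b \<and> xR = own_coord cw p a (p b) \<and> (sR \<longleftrightarrow> cw b = cw a)) \<and>
       (\<exists>b. is_Left n cw p a b \<and> xL = own_coord cw p a (p b) \<and> (sL \<longleftrightarrow> cw b = cw a)))"

definition valid_config :: "nat \<Rightarrow> nat \<Rightarrow> (nat \<Rightarrow> real) \<Rightarrow> (nat \<Rightarrow> nat) \<Rightarrow> bool" where
  "valid_config N n p ids \<longleftrightarrow> 4 < n \<and> n \<le> N \<and>
     (\<forall>i<n. 0 \<le> p i \<and> p i < 1) \<and> inj_on p {..<n} \<and>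
     inj_on ids {..<n} \<and> (\<forall>i<n. ids i \<in> {1..N})"

end

theory Submission
  imports Defs "HOL-Library.Log_Nat"
begin

text \<open>
  Agents never pass each other, so at any time their positions are the order statistics of freely
  moving virtual particles on the line covering the circle. Hence a round with unit speeds moves every
  agent by the same number of places in the cyclic order, and a second round with all directions
  reversed brings every agent back. The algorithm works in phases of two such rounds, in which the
  agents choose their own directions by the bits of their IDs, so that within \<open>2 + 2 log N\<close> phases
  any two agents realise every combination of own directions.

  If agent \<open>a\<close> heads towards its nearest neighbour \<open>b\<close> on one side, its first collision occurs at
  least halfway to \<open>b\<close>, and exactly halfway if \<open>b\<close> comes towards it. So twice the least
  first-collision distance over the phases in which \<open>a\<close> goes own-right (own-left) is the distance
  to \<open>Right(a)\<close> (\<open>Left(a)\<close>); and in the phase in which everybody goes own-right (own-left), \<open>a\<close> meets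
  that neighbour halfway iff their orientations differ.
\<close>

text \<open>\<open>lifted_ostat n a k\<close> is the point of index \<open>k\<close> in the sorted family \<open>a i + m\<close>
  (\<open>i < n\<close>, \<open>m \<in> \<int>\<close>), indexed so that the points with \<open>m = 0\<close> have indices \<open>0..<n\<close> when all
  \<open>a i\<close> lie in \<open>[0, 1)\<close>; \<open>lifted_count\<close> is the closed form of \<open>cnt\<close>.\<close>

definition lifted_count :: "nat \<Rightarrow> (nat \<Rightarrow> real) \<Rightarrow> real \<Rightarrow> int" where
  "lifted_count n a y = (\<Sum>i<n. \<lceil>y - a i\<rceil>)"

definition lifted_ostat :: "nat \<Rightarrow> (nat \<Rightarrow> real) \<Rightarrow> int \<Rightarrow> real" where
  "lifted_ostat n a k = Sup {y. lifted_count n a y \<le> k}"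

lemma lifts_as_intervals:
  fixes x c y :: real
  assumes "0 \<le> x" "x < 1"
  shows "{m::int. 0 \<le> x + m \<and> x + m + c < y} = {0..<\<lceil>y - x - c\<rceil>}"
    and "{m::int. x + m < 0 \<and> y \<le> x + m + c} = {\<lceil>y - x - c\<rceil>..<0}"
proof -
  have nonneg: "0 \<le> x + m \<longleftrightarrow> 0 \<le> m" for m :: int
    using assms by auto
  have below: "x + m + c < y \<longleftrightarrow> m < \<lceil>y - x - c\<rceil>" for m :: int
    by (simp add: less_ceiling_iff) linarith
  show "{m::int. 0 \<le> x + m \<and> x + m + c < y} = {0..<\<lceil>y - x - c\<rceil>}"
    using nonneg below by auto
  show "{m::int. x + m < 0 \<and> y \<le> x + m + c} = {\<lceil>y - x - c\<rceil>..<0}"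
    using nonneg below by (auto simp: not_le[symmetric])
qed

lemma cnt_eq_lifted_count:
  assumes "\<forall>i<n. 0 \<le> p i \<and> p i < 1"
  shows "cnt n p v t y = lifted_count n (\<lambda>i. p i + v i * t) y"
proof -
  have card_pairs: "card {(i, m::int). i < n \<and> P i m} = (\<Sum>i<n. card {m. P i m})"
    if "\<And>i. i < n \<Longrightarrow> finite {m. P i m}" for P
  proof -
    have "{(i, m::int). i < n \<and> P i m} = Sigma {..<n} (\<lambda>i. {m. P i m})" by auto
    then show ?thesis using that by simp
  qed
  have fibre: "int (card {m::int. 0 \<le> p i + m \<and> p i + m + v i * t < y})
      - int (card {m::int. p i + m < 0 \<and> y \<le> p i + m + v i * t}) = \<lceil>y - (p i + v i * t)\<rceil>"
    if "i < n" for i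
    using assms that by (simp add: lifts_as_intervals diff_diff_eq ceiling_eq_iff)
  have "finite {m::int. 0 \<le> p i + m \<and> p i + m + v i * t < y}"
    "finite {m::int. p i + m < 0 \<and> y \<le> p i + m + v i * t}" if "i < n" for i
    using assms that by (simp_all add: lifts_as_intervals)
  then show ?thesis
    unfolding cnt_def lifted_count_def
    by (simp add: card_pairs sum_subtractf[symmetric] fibre)
qed

lemma lifted_count_mono: "y \<le> y' \<Longrightarrow> lifted_count n a y \<le> lifted_count n a y'"
  unfolding lifted_count_def by (intro sum_mono ceiling_mono) auto

lemma lifted_count_lower: "real n * y - (\<Sum>i<n. a i) \<le> lifted_count n a y"
proof -
  have "real n * y - (\<Sum>i<n. a i) = (\<Sum>i<n. y - a i)" by (simp add: sum_subtractf)
  also have "\<dots> \<le> (\<Sum>i<n. of_int \<lceil>y - a i\<rceil>)" by (intro sum_mono) simp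
  finally show ?thesis by (simp add: lifted_count_def)
qed

lemma lifted_count_upper: "lifted_count n a y \<le> real n * y - (\<Sum>i<n. a i) + real n"
proof -
  have "(\<Sum>i<n. of_int \<lceil>y - a i\<rceil>) \<le> (\<Sum>i<n. y - a i + 1)"
    by (intro sum_mono) linarith
  also have "\<dots> = real n * y - (\<Sum>i<n. a i) + real n" by (simp add: sum.distrib sum_subtractf)
  finally show ?thesis by (simp add: lifted_count_def)
qed

lemma lifted_count_add_int: "lifted_count n a (y + of_int m) = lifted_count n a y + int n * m"
proof -
  have "\<lceil>y + of_int m - a i\<rceil> = \<lceil>y - a i\<rceil> + m" for i
    using ceiling_add_of_int[of "y - a i" m] by (simp add: algebra_simps)
  then show ?thesis by (simp add: lifted_count_def sum.distrib)
qed

lemma lifted_count_shift: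
  assumes "\<forall>i<n. b i = a i + of_int (m i)"
  shows "lifted_count n b y = lifted_count n a y - (\<Sum>i<n. m i)"
proof -
  have "\<lceil>y - b i\<rceil> = \<lceil>y - a i\<rceil> - m i" if "i < n" for i
    using assms that ceiling_diff_of_int[of "y - a i" "m i"] by (simp add: algebra_simps)
  then show ?thesis by (simp add: lifted_count_def sum_subtractf)
qed

lemma eventually_ceiling_diff: "\<forall>\<^sub>F u in at_right 0. \<lceil>x - u\<rceil> = \<lceil>x\<rceil>"
  for x :: real
  unfolding eventually_at_right_field
proof (intro exI conjI allI impI)
  show "0 < x + 1 - of_int \<lceil>x\<rceil>"
    using ceiling_correct[of x] by linarith
  show "\<lceil>x - u\<rceil> = \<lceil>x\<rceil>" if "0 < u" "u < x + 1 - of_int \<lceil>x\<rceil>" for u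
    unfolding ceiling_eq_iff using that ceiling_correct[of x] by linarith
qed

lemma eventually_ceiling_add: "\<forall>\<^sub>F u in at_right 0. \<lceil>x + u\<rceil> = \<lceil>x\<rceil> + of_bool (x \<in> \<int>)"
  for x :: real
proof (cases "x \<in> \<int>")
  case True
  then show ?thesis
    unfolding eventually_at_right_field
    by (intro exI[of _ 1]) (auto simp: ceiling_eq_iff elim!: Ints_cases)
next
  case False
  then have "x < of_int \<lceil>x\<rceil>"
    by (metis Ints_of_int le_of_int_ceiling order_less_le)
  then show ?thesis
    unfolding eventually_at_right_field using False ceiling_correct[of x]
    by (intro exI[of _ "of_int \<lceil>x\<rceil> - x"]) (auto simp: ceiling_eq_iff)
qed

lemma eventually_lifted_count_left:
  "\<forall>\<^sub>F u in at_right 0. lifted_count n a (y - u) = lifted_count n a y"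
proof -
  have "\<forall>\<^sub>F u in at_right 0. \<forall>i\<in>{..<n}. \<lceil>(y - a i) - u\<rceil> = \<lceil>y - a i\<rceil>"
    by (intro eventually_ball_finite ballI eventually_ceiling_diff) auto
  then show ?thesis
    by eventually_elim (simp add: lifted_count_def algebra_simps)
qed

lemma eventually_lifted_count_right:
  "\<forall>\<^sub>F u in at_right 0.
     lifted_count n a (y + u) = lifted_count n a y + int (card {i. i < n \<and> y - a i \<in> \<int>})"
proof -
  have "\<forall>\<^sub>F u in at_right 0. \<forall>i\<in>{..<n}. \<lceil>(y - a i) + u\<rceil> = \<lceil>y - a i\<rceil> + of_bool (y - a i \<in> \<int>)"
    by (intro eventually_ball_finite ballI eventually_ceiling_add) auto
  moreover have "int (card {i. i < n \<and> y - a i \<in> \<int>}) = (\<Sum>i<n. of_bool (y - a i \<in> \<int>))"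
    by (simp add: Int_def)
  ultimately show ?thesis
    by (elim eventually_mono) (simp add: lifted_count_def algebra_simps sum.distrib)
qed

lemma eventually_at_right_0_witness:
  fixes c :: real
  assumes "\<forall>\<^sub>F u in at_right 0. P u" "0 < c"
  shows "\<exists>u. 0 < u \<and> u < c \<and> P u"
proof -
  obtain b where "b > 0" "\<And>u. 0 < u \<Longrightarrow> u < b \<Longrightarrow> P u"
    using assms(1) unfolding eventually_at_right_field by blast
  then show ?thesis using assms(2) by (intro exI[of _ "min b c / 2"]) auto
qed

lemma lifted_count_le_nonempty:
  assumes "n > 0"
  shows "{y. lifted_count n a y \<le> k} \<noteq> {}"
proof -
  define y where "y = (of_int k - real n + (\<Sum>i<n. a i)) / real n"
  have "lifted_count n a y \<le> k" using lifted_count_upper[of n a y] assms by (simp add: y_def)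
  then show ?thesis by auto
qed

lemma lifted_count_le_bdd_above:
  assumes "n > 0"
  shows "bdd_above {y. lifted_count n a y \<le> k}"
proof (rule bdd_aboveI)
  fix y assume "y \<in> {y. lifted_count n a y \<le> k}"
  then have "real n * y \<le> of_int k + (\<Sum>i<n. a i)" using lifted_count_lower[of n y a] by simp
  then show "y \<le> (of_int k + (\<Sum>i<n. a i)) / real n" using assms by (simp add: field_simps)
qed

lemma less_lifted_count_above_ostat:
  assumes "n > 0" "lifted_ostat n a k < y"
  shows "k < lifted_count n a y"
proof (rule ccontr)
  assume "\<not> k < lifted_count n a y"
  then have "y \<le> lifted_ostat n a k"
    unfolding lifted_ostat_def by (intro cSup_upper lifted_count_le_bdd_above[OF assms(1)]) auto
  then show False using assms(2) by simp
qed

lemma lifted_count_ostat_le: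
  assumes "n > 0"
  shows "lifted_count n a (lifted_ostat n a k) \<le> k"
proof -
  define S where "S = {y. lifted_count n a y \<le> k}"
  have x: "lifted_ostat n a k = Sup S" unfolding lifted_ostat_def S_def ..
  obtain d where "0 < d" and const: "lifted_count n a (Sup S - d) = lifted_count n a (Sup S)"
    using eventually_at_right_0_witness[OF eventually_lifted_count_left zero_less_one] by blast
  then have "Sup S - d < Sup S" by simp
  then obtain y where y: "y \<in> S" "Sup S - d < y"
    using less_cSupE[of "Sup S - d" S] lifted_count_le_nonempty[OF assms] unfolding S_def by metis
  then show ?thesis
    using lifted_count_mono[of "Sup S - d" y n a] const unfolding x by (simp add: S_def)
qed

lemma lifted_ostat_eq_iff:
  assumes "n > 0"
  shows "lifted_ostat n a k = y \<longleftrightarrow>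
    lifted_count n a y \<le> k \<and> k < lifted_count n a y + int (card {i. i < n \<and> y - a i \<in> \<int>})"
    (is "_ \<longleftrightarrow> _ \<and> k < ?jump")
proof
  assume y: "lifted_ostat n a k = y"
  obtain u where "0 < u" "lifted_count n a (y + u) = ?jump"
    using eventually_at_right_0_witness[OF eventually_lifted_count_right zero_less_one] by blast
  moreover have "k < lifted_count n a (y + u)"
    using y \<open>0 < u\<close> by (intro less_lifted_count_above_ostat[OF assms]) simp
  ultimately show "lifted_count n a y \<le> k \<and> k < ?jump"
    using y lifted_count_ostat_le[OF assms, of a k] by simp
next
  assume bounds: "lifted_count n a y \<le> k \<and> k < ?jump"
  show "lifted_ostat n a k = y"
    unfolding lifted_ostat_def
  proof (rule cSup_eq_maximum)
    show "y \<in> {y. lifted_count n a y \<le> k}" using bounds by simp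
    fix x assume x: "x \<in> {y. lifted_count n a y \<le> k}"
    show "x \<le> y"
    proof (rule ccontr)
      assume "\<not> x \<le> y"
      then obtain u where "0 < u" "u < x - y" "lifted_count n a (y + u) = ?jump"
        using eventually_at_right_0_witness[OF eventually_lifted_count_right, of "x - y" n a y]
        by auto
      then show False
        using x bounds lifted_count_mono[of "y + u" x n a] by simp
    qed
  qed
qed

lemma lifted_ostat_add_int:
  assumes "n > 0"
  shows "lifted_ostat n a (k + int n * m) = lifted_ostat n a k + of_int m"
proof -
  let ?y = "lifted_ostat n a k"
  have "{i. i < n \<and> ?y + of_int m - a i \<in> \<int>} = {i. i < n \<and> ?y - a i \<in> \<int>}"
  proof -
    have "x + of_int m \<in> \<int> \<longleftrightarrow> x \<in> \<int>" for x :: real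
      by (metis Ints_add Ints_diff Ints_of_int add_diff_cancel_right')
    then show ?thesis by (metis diff_add_eq)
  qed
  then show ?thesis
    using lifted_ostat_eq_iff[OF assms, of a k ?y]
    by (subst lifted_ostat_eq_iff[OF assms]) (simp add: lifted_count_add_int)
qed

lemma lifted_ostat_mod:
  assumes "n > 0"
  shows "lifted_ostat n a k = lifted_ostat n a (k mod int n) + of_int (k div int n)"
  using lifted_ostat_add_int[OF assms, of a "k mod int n" "k div int n"] by simp

lemma lifted_ostat_shift:
  assumes "\<forall>i<n. b i = a i + of_int (m i)"
  shows "lifted_ostat n b k = lifted_ostat n a (k + (\<Sum>i<n. m i))"
  unfolding lifted_ostat_def lifted_count_shift[OF assms] by (simp add: algebra_simps)

lemma ostat_eq_lifted_ostat:
  assumes "\<forall>i<n. 0 \<le> p i \<and> p i < 1"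
  shows "ostat n p v k t = lifted_ostat n (\<lambda>i. p i + v i * t) k"
  unfolding ostat_def lifted_ostat_def cnt_eq_lifted_count[OF assms] ..

definition circle_config :: "nat \<Rightarrow> (nat \<Rightarrow> real) \<Rightarrow> bool" where
  "circle_config n p \<longleftrightarrow> (\<forall>i<n. 0 \<le> p i \<and> p i < 1) \<and> inj_on p {..<n}"

lemma circle_configD: "circle_config n p \<Longrightarrow> i < n \<Longrightarrow> 0 \<le> p i \<and> p i < 1"
  unfolding circle_config_def by simp

lemma circle_config_diff_in_Ints_iff:
  assumes "circle_config n p" "i < n" "j < n"
  shows "p i - p j \<in> \<int> \<longleftrightarrow> i = j"
proof
  assume "p i - p j \<in> \<int>"
  then obtain m where m: "p i - p j = of_int m" by (elim Ints_cases)
  moreover have "\<bar>p i - p j\<bar> < 1"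
    using circle_configD[OF assms(1,2)] circle_configD[OF assms(1,3)] by linarith
  ultimately have "m = 0" by linarith
  then have "p i = p j" using m by simp
  then show "i = j" using assms unfolding circle_config_def by (auto dest: inj_onD)
qed simp

lemma rank_eq_lifted_count:
  assumes "circle_config n p" "i < n"
  shows "int (rank n p i) = lifted_count n p (p i)"
proof -
  have "\<lceil>p i - p j\<rceil> = of_bool (p j < p i)" if "j < n" for j
    using circle_configD[OF assms] circle_configD[OF assms(1) that] by (simp add: ceiling_eq_iff)
  then show ?thesis by (simp add: rank_def lifted_count_def Int_def)
qed

lemma lifted_ostat_rank:
  assumes "circle_config n p" "i < n"
  shows "lifted_ostat n p (rank n p i) = p i"
proof -
  have "{j. j < n \<and> p i - p j \<in> \<int>} = {i}"
    using circle_config_diff_in_Ints_iff[OF assms(1)] assms(2) by auto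
  then show ?thesis
    using assms by (subst lifted_ostat_eq_iff) (auto simp: rank_eq_lifted_count)
qed

lemma rank_less: "i < n \<Longrightarrow> rank n p i < n"
proof -
  assume "i < n"
  then have "{j. j < n \<and> p j < p i} \<subset> {..<n}" by auto
  then show ?thesis unfolding rank_def by (metis card_lessThan finite_lessThan psubset_card_mono)
qed

lemma rank_less_iff:
  assumes "circle_config n p" "i < n" "j < n"
  shows "rank n p i < rank n p j \<longleftrightarrow> p i < p j"
proof
  assume "p i < p j"
  then have "{l. l < n \<and> p l < p i} \<subset> {l. l < n \<and> p l < p j}" using assms(2) by auto
  then show "rank n p i < rank n p j" unfolding rank_def by (intro psubset_card_mono) auto
next
  assume less: "rank n p i < rank n p j"
  show "p i < p j"
  proof (rule ccontr)
    assume "\<not> p i < p j"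
    then have "{l. l < n \<and> p l < p j} \<subseteq> {l. l < n \<and> p l < p i}" by auto
    then have "rank n p j \<le> rank n p i" unfolding rank_def by (intro card_mono) auto
    then show False using less by simp
  qed
qed

lemma bij_betw_rank:
  assumes "circle_config n p"
  shows "bij_betw (rank n p) {..<n} {..<n}"
proof -
  have "inj_on (rank n p) {..<n}"
  proof (rule inj_onI)
    fix i j assume "i \<in> {..<n}" "j \<in> {..<n}" "rank n p i = rank n p j"
    then have "\<not> p i < p j" "\<not> p j < p i"
      using rank_less_iff[OF assms, of i j] rank_less_iff[OF assms, of j i] by simp_all
    then have "p i = p j" by linarith
    then show "i = j" using assms \<open>i \<in> {..<n}\<close> \<open>j \<in> {..<n}\<close>
      unfolding circle_config_def by (auto dest: inj_onD)
  qed
  moreover have "rank n p ` {..<n} \<subseteq> {..<n}" using rank_less by auto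
  ultimately show ?thesis by (simp add: bij_betw_def endo_inj_surj)
qed

lemma lifted_ostat_range:
  assumes "circle_config n p" "0 \<le> k" "k < int n"
  shows "0 \<le> lifted_ostat n p k \<and> lifted_ostat n p k < 1"
proof -
  have "nat k \<in> rank n p ` {..<n}"
    using bij_betw_rank[OF assms(1)] assms(2,3) unfolding bij_betw_def by simp
  then obtain i where "i < n" "k = int (rank n p i)" using assms(2) by force
  then show ?thesis using lifted_ostat_rank[OF assms(1)] circle_configD[OF assms(1)] by simp
qed

lemma cnt_cong: "\<forall>i<n. p i = q i \<Longrightarrow> cnt n p v t y = cnt n q v t y"
  unfolding cnt_def
  by (intro arg_cong2[where f = "(-)"] arg_cong[where f = int] arg_cong[where f = card]) auto

lemma ostat_cong:
  assumes "\<forall>i<n. p i = q i"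
  shows "ostat n p v k t = ostat n q v k t"
  unfolding ostat_def using cnt_cong[OF assms] by simp

lemma rank_cong: "\<forall>i<n. p i = q i \<Longrightarrow> i < n \<Longrightarrow> rank n p i = rank n q i"
  unfolding rank_def by (intro arg_cong[where f = card]) auto

lemma lpos_cong:
  assumes "\<forall>i<n. p i = q i" "i < n"
  shows "lpos n p v i t = lpos n q v i t"
  unfolding lpos_def using ostat_cong[OF assms(1)] rank_cong[OF assms] by simp

lemma coll_dist_cong:
  assumes "\<forall>i<n. p i = q i" "i < n"
  shows "coll_dist n p v i = coll_dist n q v i"
proof -
  have "collides n p v i t = collides n q v i t" for t
    unfolding collides_def using ostat_cong[OF assms(1)] rank_cong[OF assms] by simp
  then show ?thesis unfolding coll_dist_def by simp
qed

lemma lifted_ostat_permute: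
  assumes "bij_betw \<sigma> {..<n} {..<n}"
  shows "lifted_ostat n (a \<circ> \<sigma>) = lifted_ostat n a"
proof -
  have "lifted_count n (a \<circ> \<sigma>) = lifted_count n a"
    unfolding lifted_count_def comp_def
    using sum.reindex_bij_betw[OF assms, of "\<lambda>i. \<lceil>_ - a i\<rceil>"] by simp
  then show ?thesis unfolding lifted_ostat_def by simp
qed

lemma rank_permute:
  assumes "bij_betw \<sigma> {..<n} {..<n}" "i < n"
  shows "rank n (p \<circ> \<sigma>) i = rank n p (\<sigma> i)"
proof -
  have "bij_betw \<sigma> {j. j < n \<and> p (\<sigma> j) < p (\<sigma> i)} {j. j < n \<and> p j < p (\<sigma> i)}"
    using assms(1) unfolding bij_betw_def inj_on_def by auto
  then show ?thesis unfolding rank_def by (simp add: bij_betw_same_card)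
qed

lemma circle_config_permute:
  assumes "circle_config n p" "bij_betw \<sigma> {..<n} {..<n}"
  shows "circle_config n (p \<circ> \<sigma>)"
  using assms unfolding circle_config_def bij_betw_def
  by (auto intro: comp_inj_on inj_on_subset)

text \<open>Agents never pass, so a round with integer speeds moves every agent forward in the cyclic
  order by the net drift \<open>\<Sum>j<n. v j\<close>.\<close>

lemma frac_lpos_round:
  assumes p: "circle_config n p" and v: "\<forall>j<n. v j \<in> \<int>" and i: "i < n"
  shows "frac (lpos n p v i 1) = lifted_ostat n p ((int (rank n p i) + (\<Sum>j<n. \<lfloor>v j\<rfloor>)) mod int n)"
proof -
  let ?k = "int (rank n p i) + (\<Sum>j<n. \<lfloor>v j\<rfloor>)"
  have n: "n > 0" using i by simp
  have range: "\<forall>j<n. 0 \<le> p j \<and> p j < 1" using p unfolding circle_config_def by simp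
  have "\<forall>j<n. p j + v j * 1 = p j + of_int \<lfloor>v j\<rfloor>" using v by simp
  then have "lpos n p v i 1 = lifted_ostat n p ?k"
    unfolding lpos_def ostat_eq_lifted_ostat[OF range] by (rule lifted_ostat_shift)
  also have "\<dots> = lifted_ostat n p (?k mod int n) + of_int (?k div int n)"
    by (rule lifted_ostat_mod[OF n])
  finally show ?thesis
    using lifted_ostat_range[OF p, of "?k mod int n"] n by (simp add: frac_eq)
qed

lemma bij_betw_rotate:
  assumes "n > 0"
  shows "bij_betw (\<lambda>r. nat ((int r + S) mod int n)) {..<n} {..<n}"
proof -
  have "inj_on (\<lambda>r. nat ((int r + S) mod int n)) {..<n}"
  proof (rule inj_onI)
    fix r r' assume r: "r \<in> {..<n}" "r' \<in> {..<n}"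
      and "nat ((int r + S) mod int n) = nat ((int r' + S) mod int n)"
    then have "(int r + S) mod int n = (int r' + S) mod int n"
      using assms by (simp add: eq_nat_nat_iff)
    then have "(int r + S - S) mod int n = (int r' + S - S) mod int n" by (rule mod_diff_cong) simp
    then show "r = r'" using r by simp
  qed
  moreover have "(\<lambda>r. nat ((int r + S) mod int n)) ` {..<n} \<subseteq> {..<n}"
    using assms by (auto simp: nat_less_iff)
  ultimately show ?thesis by (simp add: bij_betw_def endo_inj_surj)
qed

lemma round_permutes_agents:
  assumes p: "circle_config n p" and v: "\<forall>j<n. v j \<in> \<int>" and n: "n > 0"
  obtains \<sigma> where "bij_betw \<sigma> {..<n} {..<n}" "\<forall>j<n. frac (lpos n p v j 1) = p (\<sigma> j)"
    "\<forall>j<n. int (rank n p (\<sigma> j)) = (int (rank n p j) + (\<Sum>j<n. \<lfloor>v j\<rfloor>)) mod int n"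
proof -
  define \<rho> where "\<rho> = rank n p"
  define \<tau> where "\<tau> r = nat ((int r + (\<Sum>j<n. \<lfloor>v j\<rfloor>)) mod int n)" for r
  have \<rho>: "bij_betw \<rho> {..<n} {..<n}" unfolding \<rho>_def by (rule bij_betw_rank[OF p])
  have \<tau>: "bij_betw \<tau> {..<n} {..<n}" unfolding \<tau>_def by (rule bij_betw_rotate[OF n])
  define \<sigma> where "\<sigma> = inv_into {..<n} \<rho> \<circ> \<tau> \<circ> \<rho>"
  have \<sigma>: "bij_betw \<sigma> {..<n} {..<n}"
    unfolding \<sigma>_def by (rule bij_betw_trans[OF \<rho> bij_betw_trans[OF \<tau> bij_betw_inv_into[OF \<rho>]]])
  have \<rho>\<sigma>: "\<rho> (\<sigma> j) = \<tau> (\<rho> j)" if "j < n" for j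
  proof -
    have "\<tau> (\<rho> j) \<in> \<rho> ` {..<n}" using \<rho> \<tau> that unfolding bij_betw_def by blast
    then show ?thesis by (simp add: \<sigma>_def f_inv_into_f)
  qed
  have "frac (lpos n p v j 1) = p (\<sigma> j)" if "j < n" for j
    using frac_lpos_round[OF p v that] lifted_ostat_rank[OF p, of "\<sigma> j"] bij_betw_apply[OF \<sigma>, of j]
      that \<rho>\<sigma>[OF that] n
    unfolding \<rho>_def \<tau>_def by simp
  moreover have "int (\<rho> (\<sigma> j)) = (int (\<rho> j) + (\<Sum>j<n. \<lfloor>v j\<rfloor>)) mod int n" if "j < n" for j
    using \<rho>\<sigma>[OF that] n unfolding \<tau>_def by simp
  ultimately show ?thesis using that \<sigma> unfolding \<rho>_def by blast
qed

lemma frac_lpos_round_trip: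
  assumes p: "circle_config n p" and v: "\<forall>j<n. v j \<in> \<int>" and i: "i < n"
  shows "frac (lpos n (\<lambda>j. frac (lpos n p v j 1)) (\<lambda>j. - v j) i 1) = p i"
proof -
  let ?S = "\<Sum>j<n. \<lfloor>v j\<rfloor>"
  have n: "n > 0" using i by simp
  obtain \<sigma> where \<sigma>: "bij_betw \<sigma> {..<n} {..<n}" and first: "\<forall>j<n. frac (lpos n p v j 1) = (p \<circ> \<sigma>) j"
    and rank_\<sigma>: "\<forall>j<n. int (rank n p (\<sigma> j)) = (int (rank n p j) + ?S) mod int n"
    using round_permutes_agents[OF p v n] by auto
  have "(\<Sum>j<n. \<lfloor>- v j\<rfloor>) = - ?S"
    using v by (simp add: sum_negf[symmetric] floor_minus ceiling_altdef)
  moreover have "(int (rank n p (\<sigma> i)) - ?S) mod int n = int (rank n p i)"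
    using rank_\<sigma> i n rank_less[OF i] by (simp add: mod_diff_left_eq)
  ultimately have "frac (lpos n (p \<circ> \<sigma>) (\<lambda>j. - v j) i 1) = lifted_ostat n p (rank n p i)"
    using frac_lpos_round[OF circle_config_permute[OF p \<sigma>] _ i, of "\<lambda>j. - v j"] v
    by (simp add: lifted_ostat_permute[OF \<sigma>] rank_permute[OF \<sigma> i])
  then show ?thesis using lpos_cong[OF first i] lifted_ostat_rank[OF p i] by (simp add: comp_def)
qed

definition unit_speeds :: "nat \<Rightarrow> (nat \<Rightarrow> real) \<Rightarrow> bool" where
  "unit_speeds n v \<longleftrightarrow> (\<forall>i<n. v i = 1 \<or> v i = -1)"

definition travel_dist :: "real \<Rightarrow> (nat \<Rightarrow> real) \<Rightarrow> nat \<Rightarrow> nat \<Rightarrow> real" where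
  "travel_dist s p a i = frac (s * (p i - p a))"

lemma sign_mult_in_Ints_iff: "s = 1 \<or> s = -1 \<Longrightarrow> s * x \<in> \<int> \<longleftrightarrow> x \<in> \<int>"
  for x :: real by auto

lemma travel_dist_pos:
  assumes "circle_config n p" "a < n" "i < n" "i \<noteq> a" "s = 1 \<or> s = -1"
  shows "0 < travel_dist s p a i"
  using circle_config_diff_in_Ints_iff[OF assms(1,3,2)] assms(4,5) frac_ge_0[of "s * (p i - p a)"]
  unfolding travel_dist_def by (simp add: sign_mult_in_Ints_iff order_le_less)

lemma travel_dist_inj:
  assumes "circle_config n p" "i < n" "j < n" "s = 1 \<or> s = -1"
    and "travel_dist s p a i = travel_dist s p a j"
  shows "i = j"
proof -
  have "frac (s * (p i - p a) - s * (p j - p a)) = 0"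
    using assms(5) unfolding travel_dist_def by (rule frac_diff_eq)
  then have "s * (p i - p j) \<in> \<int>" by (simp add: algebra_simps)
  then show ?thesis
    using circle_config_diff_in_Ints_iff[OF assms(1-3)] assms(4)
    by (simp add: sign_mult_in_Ints_iff)
qed

lemma travel_dist_opposite:
  assumes "circle_config n p" "a < n" "i < n" "i \<noteq> a" "s = 1 \<or> s = -1"
  shows "travel_dist (-s) p a i = 1 - travel_dist s p a i"
  using travel_dist_pos[OF assms] unfolding travel_dist_def by (simp add: frac_neg)

lemma own_coord_eq_travel_dist: "own_coord cw p a (p i) = travel_dist (own_sgn cw a) p a i"
  unfolding own_coord_def travel_dist_def ..

lemma ceiling_add_sign_before_Int:
  fixes x d s :: real
  assumes "s = 1 \<or> s = -1" "0 \<le> d" "d < frac (- (s * x))"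
  shows "\<lceil>x + s * d\<rceil> = \<lceil>x\<rceil> \<and> x + s * d \<notin> \<int>"
proof -
  have bounds: "of_int \<lceil>x\<rceil> - 1 < x + s * d \<and> x + s * d < of_int \<lceil>x\<rceil>"
    using assms(1)
  proof
    assume "s = 1"
    then show ?thesis using assms(2,3) ceiling_correct[of x] by (simp add: frac_def floor_minus)
  next
    assume "s = -1"
    moreover have "x \<notin> \<int>" using assms(2,3) \<open>s = -1\<close> by (auto simp flip: frac_eq_0_iff)
    ultimately show ?thesis
      using assms(2,3) floor_correct[of x] ceiling_altdef[of x] by (simp add: frac_def) linarith
  qed
  then have "\<lceil>x + s * d\<rceil> = \<lceil>x\<rceil>" by (simp add: ceiling_eq_iff)
  moreover have "x + s * d \<notin> \<int>"
  proof
    assume "x + s * d \<in> \<int>"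
    then obtain m where "x + s * d = of_int m" by (elim Ints_cases)
    then have "of_int (\<lceil>x\<rceil> - 1) < (of_int m :: real)" "(of_int m :: real) < of_int \<lceil>x\<rceil>"
      using bounds by simp_all
    then show False unfolding of_int_less_iff by linarith
  qed
  ultimately show ?thesis ..
qed

lemma ceiling_Int_near:
  fixes k x :: real
  assumes "k \<in> \<int>" "x \<notin> \<int>" "\<bar>k - x\<bar> < 1"
  shows "\<lceil>k\<rceil> = \<lceil>x\<rceil> \<or> \<lceil>k\<rceil> = \<lceil>x\<rceil> - 1"
proof -
  obtain m where k: "k = of_int m" using assms(1) by (elim Ints_cases)
  have "x < of_int \<lceil>x\<rceil>" using assms(2) le_of_int_ceiling[of x] by (metis Ints_of_int order_less_le)
  then have "of_int (\<lceil>x\<rceil> - 2) < (of_int m :: real)" "(of_int m :: real) < of_int (\<lceil>x\<rceil> + 1)"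
    using assms(3) ceiling_correct[of x] k by auto
  then show ?thesis unfolding of_int_less_iff k ceiling_of_int by linarith
qed

lemma coll_dist_lower_bound:
  assumes "\<And>t. 0 < t \<Longrightarrow> t < T \<Longrightarrow> \<not> collides n p v a t" "coll_dist n p v a = Some c"
  shows "T \<le> c"
proof -
  let ?C = "{t \<in> {0<..1}. collides n p v a t}"
  have ne: "?C \<noteq> {}" and c: "c = Inf ?C"
    using assms(2) unfolding coll_dist_def by (auto split: if_splits)
  have "T \<le> Inf ?C"
  proof (rule cInf_greatest[OF ne])
    fix t assume t: "t \<in> ?C"
    show "T \<le> t"
    proof (rule ccontr)
      assume "\<not> T \<le> t"
      then show False using assms(1)[of t] t by simp
    qed
  qed
  then show ?thesis using c by simp
qed

lemma coll_dist_eqI: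
  assumes "0 < t" "t \<le> 1" "collides n p v a t" "\<And>t'. 0 < t' \<Longrightarrow> t' < t \<Longrightarrow> \<not> collides n p v a t'"
  shows "coll_dist n p v a = Some t"
proof -
  let ?C = "{t \<in> {0<..1}. collides n p v a t}"
  have "t \<in> ?C" using assms(1-3) by simp
  moreover have "Inf ?C = t"
    using assms(4) \<open>t \<in> ?C\<close> by (intro cInf_eq_minimum) (auto simp: not_less[symmetric])
  ultimately show ?thesis unfolding coll_dist_def by auto
qed

locale heading_agent =
  fixes n :: nat and p v :: "nat \<Rightarrow> real" and a :: nat and s :: real
  assumes config: "circle_config n p" and speeds: "unit_speeds n v" and agent: "a < n"
    and sign: "s = 1 \<or> s = -1" and heading: "v a = s"
begin

lemma speed_cases: "i < n \<Longrightarrow> v i = s \<or> v i = -s"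
  using speeds sign unfolding unit_speeds_def by auto

lemma ostat_at: "ostat n p v k t = lifted_ostat n (\<lambda>i. p i + v i * t) k"
  using circle_configD[OF config] by (intro ostat_eq_lifted_ostat) simp

text \<open>\<open>p a + s * t\<close> is where \<open>a\<close> would be without collisions. As long as this ghost has not met
  agent \<open>i\<close>, their offset stays strictly between the same two consecutive integers.\<close>

lemma ghost_offset_unmet:
  assumes i: "i < n" "i \<noteq> a" and t: "0 \<le> t" and unmet: "v i = -s \<longrightarrow> 2 * t < travel_dist s p a i"
  shows "\<lceil>(p a + s * t) - (p i + v i * t)\<rceil> = \<lceil>p a - p i\<rceil> \<and> (p a + s * t) - (p i + v i * t) \<notin> \<int>"
  using speed_cases[OF i(1)]
proof
  assume "v i = s"
  then show ?thesis using circle_config_diff_in_Ints_iff[OF config agent i(1)] i(2) by simp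
next
  assume vi: "v i = -s"
  have "2 * t < frac (- (s * (p a - p i)))"
    using unmet vi unfolding travel_dist_def by (simp add: algebra_simps)
  then show ?thesis
    using ceiling_add_sign_before_Int[OF sign, of "2 * t" "p a - p i"] t vi
    by (simp add: algebra_simps)
qed

lemma not_collides_while_unmet:
  assumes t: "0 \<le> t" and unmet: "\<forall>i<n. v i = -s \<longrightarrow> 2 * t < travel_dist s p a i"
  shows "\<not> collides n p v a t"
proof -
  let ?A = "\<lambda>i. p i + v i * t" and ?y = "p a + s * t" and ?r = "int (rank n p a)"
  have n: "n > 0" using agent by simp
  have "\<lceil>?y - ?A i\<rceil> = \<lceil>p a - p i\<rceil>" if "i < n" for i
    using ghost_offset_unmet[OF that _ t] unmet that heading by (cases "i = a") auto
  then have count: "lifted_count n ?A ?y = ?r"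
    unfolding rank_eq_lifted_count[OF config agent] lifted_count_def by simp
  have "{i. i < n \<and> ?y - ?A i \<in> \<int>} = {a}"
    using ghost_offset_unmet[OF _ _ t] unmet agent heading by force
  then have "lifted_ostat n ?A k = ?y \<longleftrightarrow> ?r \<le> k \<and> k < ?r + 1" for k
    by (simp add: lifted_ostat_eq_iff[OF n] count)
  then have "lifted_ostat n ?A ?r = ?y"
    and "lifted_ostat n ?A (?r + 1) \<noteq> ?y" "lifted_ostat n ?A (?r - 1) \<noteq> ?y"
    by simp_all
  then show ?thesis unfolding collides_def ostat_at Let_def by simp
qed

end

locale nearest_ahead = heading_agent +
  fixes b :: nat
  assumes neighbour: "b < n" "b \<noteq> a"
    and nearest: "\<forall>c<n. c \<noteq> a \<longrightarrow> travel_dist s p a b \<le> travel_dist s p a c"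
begin

lemma travel_dist_neighbour_bounds: "0 < travel_dist s p a b" "travel_dist s p a b < 1"
  using travel_dist_pos[OF config agent neighbour sign] unfolding travel_dist_def
  by (auto simp: frac_lt_1)

lemma approaching_farther:
  assumes "c < n" "c \<noteq> b" "v c = -s"
  shows "travel_dist s p a b < travel_dist s p a c"
proof -
  have "c \<noteq> a" using assms(3) heading sign by auto
  then have "travel_dist s p a b \<le> travel_dist s p a c" using nearest assms(1) by simp
  moreover have "travel_dist s p a b \<noteq> travel_dist s p a c"
    using travel_dist_inj[OF config neighbour(1) assms(1) sign] assms(2) by blast
  ultimately show ?thesis by simp
qed

lemma not_collides_before_meeting:
  assumes "0 < t" "2 * t < travel_dist s p a b"
  shows "\<not> collides n p v a t"
proof (rule not_collides_while_unmet)
  show "0 \<le> t" using assms(1) by simp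
  show "\<forall>i<n. v i = -s \<longrightarrow> 2 * t < travel_dist s p a i"
  proof (intro allI impI)
    fix i assume i: "i < n" "v i = -s"
    then have "i \<noteq> a" using heading sign by auto
    then show "2 * t < travel_dist s p a i" using nearest i(1) assms(2) by force
  qed
qed

lemma ghost_meets_neighbour:
  assumes vb: "v b = -s"
  defines "t \<equiv> travel_dist s p a b / 2"
  shows "(p a + s * t) - (p b + v b * t) \<in> \<int>"
    and "\<exists>D. (D = 0 \<or> D = -1) \<and> \<lceil>(p a + s * t) - (p b + v b * t)\<rceil> = \<lceil>p a - p b\<rceil> + D"
proof -
  have "(p a + s * t) - (p b + v b * t) = - s * of_int \<lfloor>s * (p b - p a)\<rfloor>"
    using sign vb unfolding t_def travel_dist_def frac_def
    by (elim disjE) (simp_all add: field_simps)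
  then show int: "(p a + s * t) - (p b + v b * t) \<in> \<int>"
    using sign by (simp add: sign_mult_in_Ints_iff)
  have "\<bar>((p a + s * t) - (p b + v b * t)) - (p a - p b)\<bar> < 1"
    using vb sign travel_dist_neighbour_bounds unfolding t_def by auto
  moreover have "p a - p b \<notin> \<int>"
    using circle_config_diff_in_Ints_iff[OF config agent neighbour(1)] neighbour(2) by simp
  ultimately show "\<exists>D. (D = 0 \<or> D = -1) \<and> \<lceil>(p a + s * t) - (p b + v b * t)\<rceil> = \<lceil>p a - p b\<rceil> + D"
    using ceiling_Int_near[OF int] by fastforce
qed

lemma collides_at_meeting:
  assumes vb: "v b = -s"
  shows "collides n p v a (travel_dist s p a b / 2)"
proof -
  let ?t = "travel_dist s p a b / 2"
  let ?A = "\<lambda>i. p i + v i * ?t" and ?y = "p a + s * ?t" and ?r = "int (rank n p a)"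
  have n: "n > 0" using agent by simp
  obtain D where D: "D = 0 \<or> D = -1" "\<lceil>?y - ?A b\<rceil> = \<lceil>p a - p b\<rceil> + D"
    using ghost_meets_neighbour(2)[OF vb] by blast
  have "\<lceil>?y - ?A i\<rceil> = \<lceil>p a - p i\<rceil> + (if i = b then D else 0)" if "i < n" for i
  proof (cases "i = a \<or> i = b")
    case True
    then show ?thesis using heading neighbour(2) D(2) by auto
  next
    case False
    then show ?thesis
      using ghost_offset_unmet[OF that _, of ?t] approaching_farther[OF that]
        travel_dist_neighbour_bounds
      by auto
  qed
  then have "lifted_count n ?A ?y = lifted_count n p (p a) + D"
    using neighbour(1) unfolding lifted_count_def by (simp add: sum.distrib)
  then have count: "lifted_count n ?A ?y = ?r + D"
    by (simp add: rank_eq_lifted_count[OF config agent])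
  have "{a, b} \<subseteq> {i. i < n \<and> ?y - ?A i \<in> \<int>}"
    using agent neighbour(1) heading ghost_meets_neighbour(1)[OF vb] by auto
  then have "card {a, b} \<le> card {i. i < n \<and> ?y - ?A i \<in> \<int>}" by (intro card_mono) simp_all
  then have "2 \<le> card {i. i < n \<and> ?y - ?A i \<in> \<int>}" using neighbour(2) by simp
  then have "lifted_ostat n ?A (?r + D) = ?y" "lifted_ostat n ?A (?r + D + 1) = ?y"
    using count by (simp_all add: lifted_ostat_eq_iff[OF n])
  then have "ostat n p v ?r ?t = ostat n p v (?r + 1) ?t \<or>
      ostat n p v ?r ?t = ostat n p v (?r - 1) ?t"
    using D(1) unfolding ostat_at by auto
  then show ?thesis unfolding collides_def Let_def .
qed

lemma coll_dist_lower: "coll_dist n p v a = Some c \<Longrightarrow> travel_dist s p a b \<le> 2 * c"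
  using coll_dist_lower_bound[of "travel_dist s p a b / 2"] not_collides_before_meeting by force

lemma coll_dist_eq_half_iff: "coll_dist n p v a = Some (travel_dist s p a b / 2) \<longleftrightarrow> v b = -s"
proof
  assume "v b = -s"
  then show "coll_dist n p v a = Some (travel_dist s p a b / 2)"
    using travel_dist_neighbour_bounds collides_at_meeting not_collides_before_meeting
    by (intro coll_dist_eqI) auto
next
  let ?e = "travel_dist s p a b"
  assume meet: "coll_dist n p v a = Some (?e / 2)"
  show "v b = -s"
  proof (rule ccontr)
    assume "v b \<noteq> -s"
    then have farther: "?e < travel_dist s p a i" if "i < n" "v i = -s" for i
      using approaching_farther that by blast
    have "\<forall>\<^sub>F t in at_right (?e / 2). v i = -s \<longrightarrow> 2 * t < travel_dist s p a i" if "i < n" for i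
    proof (cases "v i = -s")
      case True
      then show ?thesis
        unfolding eventually_at_right_field using farther[OF that True]
        by (intro exI[of _ "travel_dist s p a i / 2"]) auto
    qed simp
    then have "\<forall>\<^sub>F t in at_right (?e / 2). \<forall>i\<in>{..<n}. v i = -s \<longrightarrow> 2 * t < travel_dist s p a i"
      by (intro eventually_ball_finite) auto
    then obtain T where T: "?e / 2 < T"
      and later: "\<And>t. ?e / 2 < t \<Longrightarrow> t < T \<Longrightarrow> \<forall>i<n. v i = -s \<longrightarrow> 2 * t < travel_dist s p a i"
      unfolding eventually_at_right_field by auto
    have "\<not> collides n p v a t" if "0 < t" "t < T" for t
    proof (rule not_collides_while_unmet)
      show "0 \<le> t" using that by simp
      show "\<forall>i<n. v i = -s \<longrightarrow> 2 * t < travel_dist s p a i"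
        using later[of t] farther that by (cases "?e / 2 < t") force+
    qed
    then show False using coll_dist_lower_bound[OF _ meet] T by force
  qed
qed

end

lemma run_Suc:
  "run n cw ids alg p0 (Suc r) =
     (let R = run n cw ids alg p0 r; v = velocity cw (\<lambda>i. alg (ids i) (snd R i)) in
     (\<lambda>i. frac (lpos n (fst R) v i 1),
      \<lambda>i. snd R i @ [(end_dist n (fst R) v cw i, coll_dist n (fst R) v i)]))"
  by (cases "run n cw ids alg p0 r") (simp add: Let_def)

lemma fst_run_Suc:
  "fst (run n cw ids alg p0 (Suc r)) =
     (\<lambda>i. frac (lpos n (fst (run n cw ids alg p0 r))
        (velocity cw (\<lambda>i. alg (ids i) (snd (run n cw ids alg p0 r) i))) i 1))"
  by (simp add: run_Suc Let_def del: run.simps(2))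

lemma length_run_history: "length (snd (run n cw ids alg p0 r) i) = r"
  by (induction r) (simp_all add: run_Suc Let_def del: run.simps(2))

lemma run_history_coll_dist:
  "k < r \<Longrightarrow> snd (snd (run n cw ids alg p0 r) i ! k) =
     coll_dist n (fst (run n cw ids alg p0 k))
       (velocity cw (\<lambda>i. alg (ids i) (snd (run n cw ids alg p0 k) i))) i"
proof (induction r)
  case (Suc r)
  then show ?case
    by (cases "k = r")
      (simp_all add: run_Suc Let_def nth_append length_run_history del: run.simps(2))
qed simp

definition phase_dir :: "nat \<Rightarrow> nat \<Rightarrow> bool" where
  "phase_dir j x = (if j = 0 then True else if j = 1 then False
                    else if even j then bit x ((j - 2) div 2) else \<not> bit x ((j - 2) div 2))"

text \<open>Phase \<open>j\<close> consists of rounds \<open>2 j\<close> and \<open>2 j + 1\<close>; the second retraces the first, so every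
  phase starts from the initial positions.\<close>

definition nd_alg :: "nat \<Rightarrow> percept list \<Rightarrow> bool" where
  "nd_alg x h =
     (if even (length h) then phase_dir (length h div 2) x else \<not> phase_dir (length h div 2) x)"

definition global_dir :: "bool \<Rightarrow> bool \<Rightarrow> real" where
  "global_dir c d = (if d = c then 1 else -1)"

lemma velocity_eq_global_dir: "velocity cw D i = global_dir (cw i) (D i)"
  unfolding velocity_def global_dir_def ..

lemma global_dir_cases: "global_dir c d = 1 \<or> global_dir c d = -1"
  unfolding global_dir_def by simp

lemma unit_speeds_velocity: "unit_speeds n (velocity cw D)"
  unfolding unit_speeds_def velocity_def by simp

lemma velocity_in_Ints: "velocity cw D i \<in> \<int>"
  unfolding velocity_def by simp

lemma velocity_nd_alg_even:
  "velocity cw (\<lambda>i. nd_alg (ids i) (snd (run n cw ids nd_alg p0 (2 * j)) i))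
     = velocity cw (\<lambda>i. phase_dir j (ids i))"
  unfolding nd_alg_def length_run_history by simp

lemma velocity_nd_alg_odd:
  "velocity cw (\<lambda>i. nd_alg (ids i) (snd (run n cw ids nd_alg p0 (Suc (2 * j))) i))
     = (\<lambda>i. - velocity cw (\<lambda>i. phase_dir j (ids i)) i)"
  unfolding nd_alg_def length_run_history velocity_def by auto

lemma run_nd_alg_phase_start:
  assumes "circle_config n p0"
  shows "\<forall>i<n. fst (run n cw ids nd_alg p0 (2 * j)) i = p0 i"
proof (induction j)
  case (Suc j)
  let ?v = "velocity cw (\<lambda>i. phase_dir j (ids i))"
  have first: "\<forall>i<n. fst (run n cw ids nd_alg p0 (Suc (2 * j))) i = frac (lpos n p0 ?v i 1)"
    using lpos_cong[OF Suc.IH] by (simp add: fst_run_Suc velocity_nd_alg_even del: run.simps(2))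
  show ?case
  proof (intro allI impI)
    fix i assume i: "i < n"
    have "fst (run n cw ids nd_alg p0 (2 * Suc j)) i
        = frac (lpos n (fst (run n cw ids nd_alg p0 (Suc (2 * j)))) (\<lambda>i. - ?v i) i 1)"
      by (simp add: fst_run_Suc[of _ _ _ _ _ "Suc (2 * j)"] velocity_nd_alg_odd del: run.simps(2))
    also have "\<dots> = frac (lpos n (\<lambda>i. frac (lpos n p0 ?v i 1)) (\<lambda>i. - ?v i) i 1)"
      using lpos_cong[OF first i] by simp
    also have "\<dots> = p0 i" using frac_lpos_round_trip[OF assms _ i] velocity_in_Ints by blast
    finally show "fst (run n cw ids nd_alg p0 (2 * Suc j)) i = p0 i" .
  qed
qed simp

lemma nd_alg_phase_coll_dist:
  assumes "circle_config n p0" "a < n" "j < M"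
  shows "snd (snd (run n cw ids nd_alg p0 (2 * M)) a ! (2 * j))
     = coll_dist n p0 (velocity cw (\<lambda>i. phase_dir j (ids i))) a"
  using run_history_coll_dist[of "2 * j" "2 * M"] assms(3)
    coll_dist_cong[OF run_nd_alg_phase_start[OF assms(1)] assms(2)]
  by (simp add: velocity_nd_alg_even)

lemma bit_differs:
  fixes x y :: nat
  assumes "x < 2 ^ B" "y < 2 ^ B" "x \<noteq> y"
  shows "\<exists>k<B. bit x k \<noteq> bit y k"
  using assms by (metis bit_take_bit_iff bit_eqI take_bit_nat_eq_self)

lemma phase_dir_realizes:
  fixes x y :: nat
  assumes "x < 2 ^ B" "y < 2 ^ B" "x \<noteq> y"
  shows "\<exists>j<2 + 2 * B. phase_dir j x = d \<and> phase_dir j y = e"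
proof (cases "d = e")
  case True
  then show ?thesis by (cases d) (auto simp: phase_dir_def intro: exI[of _ 0] exI[of _ 1])
next
  case False
  obtain k where k: "k < B" "bit x k \<noteq> bit y k" using bit_differs[OF assms] by blast
  have "phase_dir (2 + 2 * k) z = bit z k" "phase_dir (3 + 2 * k) z = (\<not> bit z k)" for z
    by (simp_all add: phase_dir_def)
  then show ?thesis
    using k False by (cases "bit x k = d") (auto intro: exI[of _ "2 + 2 * k"] exI[of _ "3 + 2 * k"])
qed

definition phase_gaps :: "bool \<Rightarrow> nat \<Rightarrow> nat \<Rightarrow> percept list \<Rightarrow> real set" where
  "phase_gaps d M x h = (\<lambda>j. 2 * the (snd (h ! (2 * j)))) `
     {j. j < M \<and> phase_dir j x = d \<and> snd (h ! (2 * j)) \<noteq> None}"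

definition nd_output :: "nat \<Rightarrow> nat \<Rightarrow> percept list \<Rightarrow> real \<times> real \<times> bool \<times> bool" where
  "nd_output M x h = (let gR = Min (phase_gaps True M x h); gL = Min (phase_gaps False M x h) in
     (gR, 1 - gL, snd (h ! 0) \<noteq> Some (gR / 2), snd (h ! 2) \<noteq> Some (gL / 2)))"

lemma nearest_ahead_phase:
  assumes "circle_config n p" "a < n" "b < n" "b \<noteq> a"
    and "\<forall>c<n. c \<noteq> a \<longrightarrow>
      travel_dist (global_dir (cw a) d) p a b \<le> travel_dist (global_dir (cw a) d) p a c"
    and "phase_dir j (ids a) = d"
  shows "nearest_ahead n p (velocity cw (\<lambda>i. phase_dir j (ids i))) a (global_dir (cw a) d) b"
proof (intro nearest_ahead.intro heading_agent.intro nearest_ahead_axioms.intro)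
  show "velocity cw (\<lambda>i. phase_dir j (ids i)) a = global_dir (cw a) d"
    using assms(6) by (simp add: velocity_eq_global_dir)
qed (fact assms unit_speeds_velocity global_dir_cases)+

lemma nd_output_nearest:
  assumes p: "circle_config n p" and ids: "inj_on ids {..<n}" "\<forall>i<n. ids i < 2 ^ B" and a: "a < n"
    and b: "b < n" "b \<noteq> a"
    and nearest: "\<forall>c<n. c \<noteq> a \<longrightarrow>
      travel_dist (global_dir (cw a) d) p a b \<le> travel_dist (global_dir (cw a) d) p a c"
    and M: "2 + 2 * B \<le> M"
  defines "h \<equiv> snd (run n cw ids nd_alg p (2 * M)) a"
  shows "Min (phase_gaps d M (ids a) h) = travel_dist (global_dir (cw a) d) p a b"
    and "snd (h ! (2 * of_bool (\<not> d))) \<noteq> Some (travel_dist (global_dir (cw a) d) p a b / 2)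
      \<longleftrightarrow> cw b = cw a"
proof -
  let ?s = "global_dir (cw a) d" and ?v = "\<lambda>j. velocity cw (\<lambda>i. phase_dir j (ids i))"
  let ?e = "travel_dist ?s p a b"
  have phase: "nearest_ahead n p (?v j) a ?s b" if "phase_dir j (ids a) = d" for j
    using nearest_ahead_phase[of n p a b cw d j ids, OF p a b nearest that] .
  have hist: "snd (h ! (2 * j)) = coll_dist n p (?v j) a" if "j < M" for j
    unfolding h_def by (rule nd_alg_phase_coll_dist[OF p a that])
  have "ids a \<noteq> ids b" using ids(1) a b by (auto dest: inj_onD)
  then obtain j where "j < 2 + 2 * B" "phase_dir j (ids a) = d"
    and "phase_dir j (ids b) = (cw b \<longleftrightarrow> d \<noteq> cw a)"
    using phase_dir_realizes ids(2) a b(1) by blast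
  with M have j: "j < M" "phase_dir j (ids a) = d" "phase_dir j (ids b) = (cw b \<longleftrightarrow> d \<noteq> cw a)"
    by simp_all
  then have "?v j b = - ?s" by (auto simp: velocity_eq_global_dir global_dir_def)
  then have meet: "snd (h ! (2 * j)) = Some (?e / 2)"
    using nearest_ahead.coll_dist_eq_half_iff[OF phase[OF j(2)]] hist[OF j(1)] by simp
  then have "snd (h ! (2 * j)) \<noteq> None" by simp
  then have "j \<in> {j. j < M \<and> phase_dir j (ids a) = d \<and> snd (h ! (2 * j)) \<noteq> None}"
    using j(1,2) by blast
  moreover have "?e = 2 * the (snd (h ! (2 * j)))" using meet by simp
  ultimately have attained: "?e \<in> phase_gaps d M (ids a) h"
    unfolding phase_gaps_def by (rule rev_image_eqI)
  have lower: "?e \<le> g" if "g \<in> phase_gaps d M (ids a) h" for g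
  proof -
    from that obtain j where j: "j < M" "phase_dir j (ids a) = d" "snd (h ! (2 * j)) \<noteq> None"
      and g: "g = 2 * the (snd (h ! (2 * j)))" unfolding phase_gaps_def by blast
    then obtain c where c: "snd (h ! (2 * j)) = Some c" by blast
    then have "coll_dist n p (?v j) a = Some c" using hist j(1) by simp
    then show ?thesis using nearest_ahead.coll_dist_lower[OF phase[OF j(2)]] g c by simp
  qed
  have "finite (phase_gaps d M (ids a) h)" unfolding phase_gaps_def by simp
  then show "Min (phase_gaps d M (ids a) h) = ?e" using lower attained by (rule Min_eqI)
  let ?j = "of_bool (\<not> d) :: nat"
  have dir: "phase_dir ?j x = d" for x by (simp add: phase_dir_def)
  have "?v ?j b = - ?s \<longleftrightarrow> cw b \<noteq> cw a" unfolding velocity_eq_global_dir dir global_dir_def by auto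
  moreover have "?j < M" using M by simp
  ultimately show "snd (h ! (2 * ?j)) \<noteq> Some (?e / 2) \<longleftrightarrow> cw b = cw a"
    using nearest_ahead.coll_dist_eq_half_iff[OF phase[OF dir]] hist by simp
qed

lemma exists_nearest:
  fixes f :: "nat \<Rightarrow> real"
  assumes "a < n" "2 \<le> n"
  obtains b where "b < n" "b \<noteq> a" "\<forall>c<n. c \<noteq> a \<longrightarrow> f b \<le> f c"
proof -
  have "(if a = 0 then 1 else 0) \<in> {c. c < n \<and> c \<noteq> a}" using assms by auto
  then have "{c. c < n \<and> c \<noteq> a} \<noteq> {}" by blast
  then obtain b where "is_arg_min f (\<lambda>c. c \<in> {c. c < n \<and> c \<noteq> a}) b"
    using ex_is_arg_min_if_finite[of "{c. c < n \<and> c \<noteq> a}" f] by auto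
  then show ?thesis using that unfolding is_arg_min_linorder by auto
qed

lemma nd_output_correct:
  assumes valid: "valid_config N n p ids" and ids: "\<forall>i<n. ids i < 2 ^ B" and a: "a < n"
  shows "nd_correct n cw p a
    (nd_output (2 + 2 * B) (ids a) (snd (run n cw ids nd_alg p (2 * (2 + 2 * B))) a))"
proof -
  let ?s = "own_sgn cw a"
  have p: "circle_config n p" and inj: "inj_on ids {..<n}" and n: "2 \<le> n"
    using valid unfolding valid_config_def circle_config_def by auto
  have right: "global_dir (cw a) True = ?s" and left: "global_dir (cw a) False = - ?s"
    unfolding global_dir_def own_sgn_def by simp_all
  have flip: "travel_dist ?s p a c = 1 - travel_dist (- ?s) p a c" if "c < n" "c \<noteq> a" for c
    using travel_dist_opposite[OF p a that, of "- ?s"] unfolding own_sgn_def by simp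
  obtain bR where bR: "bR < n" "bR \<noteq> a"
    "\<forall>c<n. c \<noteq> a \<longrightarrow> travel_dist ?s p a bR \<le> travel_dist ?s p a c"
    using exists_nearest[OF a n] by blast
  obtain bL where bL: "bL < n" "bL \<noteq> a"
    "\<forall>c<n. c \<noteq> a \<longrightarrow> travel_dist (- ?s) p a bL \<le> travel_dist (- ?s) p a c"
    using exists_nearest[OF a n] by blast
  note right_neighbour =
    nd_output_nearest[OF p inj ids a bR(1,2), of cw True, unfolded right, OF bR(3) order_refl]
  note left_neighbour =
    nd_output_nearest[OF p inj ids a bL(1,2), of cw False, unfolded left, OF bL(3) order_refl]
  have "is_Right n cw p a bR" using bR unfolding is_Right_def own_coord_eq_travel_dist by auto
  moreover have "is_Left n cw p a bL"
    using bL flip unfolding is_Left_def own_coord_eq_travel_dist by force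
  moreover have "1 - travel_dist (- ?s) p a bL = own_coord cw p a (p bL)"
    using flip[OF bL(1,2)] unfolding own_coord_eq_travel_dist by simp
  ultimately show ?thesis
    using right_neighbour left_neighbour unfolding nd_correct_def nd_output_def Let_def own_coord_eq_travel_dist by auto
qed

lemma nd_alg_correct:
  assumes valid: "valid_config N n p ids" and a: "a < n"
  defines "M \<equiv> 2 + 2 * floorlog 2 N"
  shows "nd_correct n cw p a (nd_output M (ids a) (snd (run n cw ids nd_alg p (2 * M)) a))"
proof -
  have "N < 2 ^ floorlog 2 N" using floorlog_bounds[of N 2] valid unfolding valid_config_def by simp
  then have "\<forall>i<n. ids i < 2 ^ floorlog 2 N" using valid unfolding valid_config_def by fastforce
  then show ?thesis unfolding M_def by (rule nd_output_correct[OF valid _ a])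
qed

lemma nd_rounds_bound:
  assumes "5 \<le> N"
  shows "real (2 * (2 + 2 * floorlog 2 N)) \<le> (8 + 4 / ln 2) * ln (real N)"
proof -
  let ?B = "floorlog 2 N"
  have pow: "2 ^ (?B - 1) \<le> N" "N < 2 ^ ?B" using floorlog_bounds[of N 2] assms by auto
  then have "1 \<le> ?B" using assms by (cases ?B) auto
  have "exp 1 \<le> real N" using exp_le assms by simp
  then have ln_N: "1 \<le> ln (real N)" using assms by (subst ln_ge_iff) auto
  have "real (2 ^ (?B - 1)) \<le> real N" using pow(1) by (simp only: of_nat_le_iff)
  then have "ln (real (2 ^ (?B - 1))) \<le> ln (real N)" by (rule ln_mono) simp
  then have "real (?B - 1) * ln 2 \<le> ln (real N)" by (simp add: ln_realpow)
  then have B: "real (?B - 1) \<le> ln (real N) / ln 2" by (simp add: field_simps)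
  have "real (2 * (2 + 2 * ?B)) = 8 + 4 * real (?B - 1)" using \<open>1 \<le> ?B\<close> by simp
  also have "\<dots> \<le> 8 * ln (real N) + 4 * (ln (real N) / ln 2)"
    using ln_N B by (intro add_mono) simp_all
  also have "\<dots> = (8 + 4 / ln 2) * ln (real N)" by (simp add: field_simps)
  finally show ?thesis .
qed

theorem proposition5:
  shows "\<exists>C::real. \<forall>N::nat. \<exists>(T::nat) (alg :: nat \<Rightarrow> percept list \<Rightarrow> bool)
           (output :: nat \<Rightarrow> percept list \<Rightarrow> real \<times> real \<times> bool \<times> bool).
     real T \<le> C * ln (real N) \<and>
     (\<forall>n p cw ids. valid_config N n p ids \<longrightarrow>
        (\<forall>a<n. nd_correct n cw p a (output (ids a) (snd (run n cw ids alg p T) a))))"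
proof (rule exI[of _ "8 + 4 / ln 2"], intro allI)
  fix N :: nat
  let ?M = "2 + 2 * floorlog 2 N"
  show "\<exists>T alg output. real T \<le> (8 + 4 / ln 2) * ln (real N) \<and>
     (\<forall>n p cw ids. valid_config N n p ids \<longrightarrow>
        (\<forall>a<n. nd_correct n cw p a (output (ids a) (snd (run n cw ids alg p T) a))))"
  proof (cases "5 \<le> N")
    case True
    then show ?thesis using nd_rounds_bound nd_alg_correct
      by (intro exI[of _ "2 * ?M"] exI[of _ nd_alg] exI[of _ "nd_output ?M"]) blast
  next
    case False
    then have "\<not> valid_config N n p ids" for n p ids unfolding valid_config_def by auto
    moreover have "0 \<le> (8 + 4 / ln (2::real)) * ln (real N)" by (cases "N = 0") auto
    ultimately show ?thesis by (intro exI[of _ 0]) auto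
  qed
qed

end
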